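(* Let $K_j\subset\mathbb{R}^n$ be a bounded, smooth, strictly convex set (each tangent plane touches $\partial K_j$ at a unique point), and let $F$ be a convex function on $\mathbb{R}^n$. Let $\mu=e^{-|x|^2/2}\,dx$, $\nu_j=e^{-F}1_{K_j}\,\mu$, and let $\nabla\varphi_j$ be the Brenier mapping transporting $\mu$ onto $c_j\nu_j$. Suppose $|x|\to\infty$ with $x/|x|$ converging to a unit vector $\mathbf{n}$. Then \[\nabla\varphi_j(x)\to y_{\mathbf n},\] uniformly in the direction $\mathbf n$, where $y_{\mathbf n}$ is the unique point on $\partial K_j$ whose outward unit normal is $\mathbf n$.
   Context: Brenier mapping: for positive measures $\mu,\nu$ on $\mathbb{R}^n$ with finite second moments, $\mu$ absolutely continuous, there is a convex function $\varphi:\mathbb{R}^n\to\mathbb{R}$ such that $T=\nabla\varphi$ satisfies $\mu(T^{-1}(E))=c\,\nu(E)$ for all Borel $E$, with $c=\mu(\mathbb{R}^n)/\nu(\mathbb{R}^n)$. *)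

theory Defs
  imports "HOL-Analysis.Analysis"
begin

definition grad :: "(real^'n \<Rightarrow> real) \<Rightarrow> real^'n \<Rightarrow> real^'n" where
  "grad f x = (\<chi> i. frechet_derivative f (at x) (axis i 1))"

coinductive Cinf :: "(real^'n \<Rightarrow> real) \<Rightarrow> bool" where
  "(\<forall>x. f differentiable (at x)) \<Longrightarrow>
   (\<forall>i. Cinf (\<lambda>x. frechet_derivative f (at x) (axis i 1))) \<Longrightarrow> Cinf f"

definition smooth_defining_function :: "(real^'n \<Rightarrow> real) \<Rightarrow> (real^'n) set \<Rightarrow> bool" where
  "smooth_defining_function \<rho> K \<longleftrightarrow>
     Cinf \<rho> \<and> interior K = {x. \<rho> x < 0} \<and> frontier K = {x. \<rho> x = 0} \<and>
     (\<forall>p \<in> frontier K. grad \<rho> p \<noteq> 0)"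

definition outward_normal :: "(real^'n \<Rightarrow> real) \<Rightarrow> real^'n \<Rightarrow> real^'n" where
  "outward_normal \<rho> p = grad \<rho> p /\<^sub>R norm (grad \<rho> p)"

definition strictly_convex_smooth :: "(real^'n \<Rightarrow> real) \<Rightarrow> (real^'n) set \<Rightarrow> bool" where
  "strictly_convex_smooth \<rho> K \<longleftrightarrow> convex K \<and>
     (\<forall>p \<in> frontier K. \<forall>q \<in> frontier K. (q - p) \<bullet> grad \<rho> p = 0 \<longrightarrow> q = p)"

definition gauss :: "(real^'n) measure" where
  "gauss = density lborel (\<lambda>x. ennreal (exp (- (norm x)\<^sup>2 / 2)))"

definition target :: "(real^'n \<Rightarrow> real) \<Rightarrow> (real^'n) set \<Rightarrow> (real^'n) measure" where
  "target F K = density gauss (\<lambda>x. ennreal (exp (- F x) * indicator K x))"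

end

theory Submission
  imports Defs
begin

text \<open>
  Strict convexity makes the support point \<open>y\<^sub>n\<close> of \<open>K\<close> depend uniformly on the direction:
  by compactness, a point of \<open>K\<close> lying within \<open>\<eta>\<close> of the supporting hyperplane with normal
  \<open>n\<close> is \<open>\<epsilon>\<close>-close to \<open>y\<^sub>n\<close>, for all \<open>n\<close> at once. It therefore suffices to show that a
  gradient \<open>g = \<nabla>\<phi>(x)\<close> with \<open>|x|\<close> large and \<open>x/|x|\<close> close to \<open>n\<close> lies in \<open>K\<close> and less
  than \<open>\<eta>\<close> below that hyperplane. Membership in \<open>K\<close> follows from monotonicity of \<open>\<nabla>\<phi>\<close>,
  which maps almost every point into \<open>K\<close>. If \<open>g\<close> were \<open>\<eta>\<close> below the hyperplane, take a
  small ball \<open>B \<subseteq> K\<close> near \<open>y\<^sub>n\<close>: every \<open>w \<in> B\<close> satisfies \<open>(w - g)\<cdot>x \<ge> \<eta>|x|/2\<close>, so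
  monotonicity \<open>(\<nabla>\<phi>(z) - g)\<cdot>(z - x) \<ge> 0\<close> forces \<open>|z| \<ge> c|x|\<close> on \<open>\<nabla>\<phi>\<^sup>-\<^sup>1(B)\<close>. Its Gaussian
  mass thus tends to \<open>0\<close>, whereas by the transport equation it is a fixed multiple of
  \<open>\<nu>(B)\<close>, which is bounded below uniformly in \<open>n\<close>.
\<close>

section \<open>Gradients of convex functions\<close>

lemma has_real_derivative_along_line:
  fixes \<rho> :: "'a::real_inner \<Rightarrow> real"
  assumes "(\<rho> has_derivative (\<lambda>h. G \<bullet> h)) (at p)"
  shows "((\<lambda>t. \<rho> (p + t *\<^sub>R v)) has_real_derivative G \<bullet> v) (at 0)"
proof -
  have "((\<lambda>t. p + t *\<^sub>R v) has_derivative (\<lambda>t. t *\<^sub>R v)) (at 0)"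
    by (auto intro!: derivative_eq_intros)
  from has_derivative_compose[OF this, of \<rho> "\<lambda>h. G \<bullet> h"] assms
  have "((\<lambda>t. \<rho> (p + t *\<^sub>R v)) has_derivative (\<lambda>t. G \<bullet> (t *\<^sub>R v))) (at 0)"
    by simp
  then show ?thesis by (rule has_derivative_imp_has_field_derivative) simp
qed

lemma convex_on_gradient_inequality:
  fixes \<phi> :: "'a::euclidean_space \<Rightarrow> real"
  assumes convex: "convex_on UNIV \<phi>" and deriv: "(\<phi> has_derivative (\<lambda>h. g \<bullet> h)) (at x)"
  shows "\<phi> x + g \<bullet> (z - x) \<le> \<phi> z"
proof -
  define f where "f t = \<phi> (x + t *\<^sub>R (z - x))" for t
  have "convex_on UNIV f"
  proof (rule convex_onI)
    fix s t u :: real assume "0 < u" "u < 1"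
    then have "\<phi> ((1 - u) *\<^sub>R (x + s *\<^sub>R (z - x)) + u *\<^sub>R (x + t *\<^sub>R (z - x)))
        \<le> (1 - u) * f s + u * f t"
      using convex by (auto simp: f_def intro!: convex_onD)
    then show "f ((1 - u) *\<^sub>R s + u *\<^sub>R t) \<le> (1 - u) * f s + u * f t"
      by (simp add: f_def algebra_simps)
  qed auto
  moreover have "(f has_field_derivative g \<bullet> (z - x)) (at 0 within UNIV)"
    unfolding f_def by (rule has_real_derivative_along_line[OF deriv])
  ultimately have "g \<bullet> (z - x) \<le> f 1 - f 0"
    using convex_on_imp_above_tangent[of UNIV f 0 1] by simp
  then show ?thesis by (simp add: f_def)
qed

lemma convex_on_gradient_monotone:
  fixes \<phi> :: "'a::euclidean_space \<Rightarrow> real"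
  assumes "convex_on UNIV \<phi>"
    and "(\<phi> has_derivative (\<lambda>h. g \<bullet> h)) (at x)" and "(\<phi> has_derivative (\<lambda>h. w \<bullet> h)) (at z)"
  shows "0 \<le> (w - g) \<bullet> (z - x)"
  using convex_on_gradient_inequality[OF assms(1,2), of z]
    convex_on_gradient_inequality[OF assms(1,3), of x]
  by (simp add: inner_diff_left inner_diff_right inner_commute)

section \<open>Smooth strictly convex bodies\<close>

lemma has_derivative_grad:
  fixes \<rho> :: "real^'n \<Rightarrow> real"
  assumes "\<rho> differentiable (at p)"
  shows "(\<rho> has_derivative (\<lambda>h. grad \<rho> p \<bullet> h)) (at p)"
proof -
  let ?L = "frechet_derivative \<rho> (at p)"
  have deriv: "(\<rho> has_derivative ?L) (at p)"
    using assms frechet_derivative_works by blast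
  interpret L: linear ?L using has_derivative_linear[OF deriv] .
  have "?L h = grad \<rho> p \<bullet> h" for h
  proof -
    have "?L h = ?L (\<Sum>i\<in>UNIV. h $ i *\<^sub>R axis i 1)"
      using basis_expansion[of h] by (simp add: scalar_mult_eq_scaleR)
    also have "\<dots> = grad \<rho> p \<bullet> h"
      by (simp add: L.sum L.scale grad_def inner_vec_def mult.commute)
    finally show ?thesis .
  qed
  then have "?L = (\<lambda>h. grad \<rho> p \<bullet> h)" ..
  with deriv show ?thesis by simp
qed

lemma Cinf_differentiable: "Cinf f \<Longrightarrow> f differentiable (at x)"
  by (cases rule: Cinf.cases) auto

lemma compact_continuous_pos_imp_uniformly_pos:
  fixes f :: "'a::topological_space \<Rightarrow> real"
  assumes "compact C" "continuous_on C f" "\<And>x. x \<in> C \<Longrightarrow> 0 < f x"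
  shows "\<exists>d>0. \<forall>x\<in>C. d \<le> f x"
proof (cases "C = {}")
  case False
  then obtain x0 where "x0 \<in> C" "\<forall>x\<in>C. f x0 \<le> f x"
    using continuous_attains_inf[OF assms(1) False assms(2)] by blast
  with assms(3) show ?thesis by (intro exI[of _ "f x0"]) simp
qed (intro exI[of _ 1], simp)

lemma convex_homothetic_ball_subset_interior:
  fixes K :: "'a::euclidean_space set"
  assumes "convex K" "ball a r \<subseteq> interior K" "y \<in> closure K" "0 < s" "s \<le> 1"
  shows "ball (y - s *\<^sub>R (y - a)) (s * r) \<subseteq> interior K"
proof
  fix w assume w: "w \<in> ball (y - s *\<^sub>R (y - a)) (s * r)"
  define b where "b = a + (1 / s) *\<^sub>R (w - (y - s *\<^sub>R (y - a)))"
  have "norm (b - a) = norm (w - (y - s *\<^sub>R (y - a))) / s"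
    using \<open>0 < s\<close> by (simp add: b_def)
  also have "\<dots> < r"
    using w \<open>0 < s\<close> by (simp add: dist_norm norm_minus_commute pos_divide_less_eq mult.commute)
  finally have "b \<in> interior K"
    using assms(2) by (auto simp: dist_norm norm_minus_commute)
  moreover have "w = y - s *\<^sub>R (y - b)" using \<open>0 < s\<close> by (simp add: b_def algebra_simps)
  ultimately show "w \<in> interior K"
    using mem_interior_closure_convex_shrink[OF assms(1) _ assms(3,4,5)] by simp
qed

lemma inner_lower_bound_homothetic_ball:
  fixes y a w n :: "'a::real_inner"
  assumes "norm n = 1" "w \<in> ball (y - s *\<^sub>R (y - a)) (s * r)" "0 \<le> s"
  shows "y \<bullet> n - s * (norm (y - a) + r) < w \<bullet> n"
proof -
  have "s * ((y - a) \<bullet> n) \<le> s * norm (y - a)"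
    using norm_cauchy_schwarz[of "y - a" n] assms(1,3) by (intro mult_left_mono) auto
  moreover have "(y - s *\<^sub>R (y - a) - w) \<bullet> n < s * r"
    using norm_cauchy_schwarz[of "y - s *\<^sub>R (y - a) - w" n] assms(1,2) by (simp add: dist_norm)
  ultimately show ?thesis by (simp add: algebra_simps inner_diff_left)
qed

locale smooth_strictly_convex_body =
  fixes K :: "(real^'n) set" and \<rho> :: "real^'n \<Rightarrow> real"
  assumes bounded: "bounded K"
    and smooth: "smooth_defining_function \<rho> K"
    and strictly_convex: "strictly_convex_smooth \<rho> K"
    and interior_nonempty: "interior K \<noteq> {}"
begin

lemma rho_has_derivative: "(\<rho> has_derivative (\<lambda>h. grad \<rho> p \<bullet> h)) (at p)"
  using smooth Cinf_differentiable has_derivative_grad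
  unfolding smooth_defining_function_def by blast

lemma interior_eq: "interior K = {x. \<rho> x < 0}"
  and frontier_eq: "frontier K = {x. \<rho> x = 0}"
  and grad_nonzero: "p \<in> frontier K \<Longrightarrow> grad \<rho> p \<noteq> 0"
  using smooth unfolding smooth_defining_function_def by auto

lemma convex: "convex K"
  and tangent_plane_touches_once:
    "p \<in> frontier K \<Longrightarrow> q \<in> frontier K \<Longrightarrow> (q - p) \<bullet> grad \<rho> p = 0 \<Longrightarrow> q = p"
  using strictly_convex unfolding strictly_convex_smooth_def by auto

lemma compact_closure_body: "compact (closure K)"
  using bounded by (simp add: compact_closure)

lemma interior_along_descent_direction:
  assumes "p \<in> frontier K" "grad \<rho> p \<bullet> v < 0"
  obtains d where "0 < d" "\<And>t. 0 < t \<Longrightarrow> t < d \<Longrightarrow> p + t *\<^sub>R v \<in> interior K"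
proof -
  from DERIV_neg_dec_right[OF has_real_derivative_along_line[OF rho_has_derivative] assms(2)]
  obtain d where "0 < d" "\<And>t. 0 < t \<Longrightarrow> t < d \<Longrightarrow> \<rho> (p + t *\<^sub>R v) < \<rho> p"
    by auto
  with assms(1) that show ?thesis by (auto simp: frontier_eq interior_eq)
qed

lemma grad_inner_nonpos:
  assumes p: "p \<in> frontier K" and w: "w \<in> closure K"
  shows "(w - p) \<bullet> grad \<rho> p \<le> 0"
proof -
  have "(w - p) \<bullet> grad \<rho> p \<le> 0" if w: "w \<in> interior K" for w
  proof (rule ccontr)
    assume "\<not> ?thesis"
    then have "0 < grad \<rho> p \<bullet> (w - p)" by (simp add: inner_commute)
    from DERIV_pos_inc_right[OF has_real_derivative_along_line[OF rho_has_derivative] this]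
    obtain d where d: "0 < d" "\<And>t. 0 < t \<Longrightarrow> t < d \<Longrightarrow> \<rho> p < \<rho> (p + t *\<^sub>R (w - p))"
      by auto
    define t where "t = min (d / 2) (1 / 2)"
    have t: "0 < t" "t < d" "t < 1" using d by (auto simp: t_def)
    have "p - t *\<^sub>R (p - w) \<in> interior K"
      using mem_interior_closure_convex_shrink[OF convex w, of p t] p t by (auto simp: frontier_def)
    then have "\<rho> (p + t *\<^sub>R (w - p)) < 0"
      by (simp add: interior_eq algebra_simps)
    with d t p show False by (fastforce simp: frontier_eq)
  qed
  then have "closure (interior K) \<subseteq> {w. (w - p) \<bullet> grad \<rho> p \<le> 0}"
    by (intro closure_minimal) (auto intro!: closed_Collect_le continuous_intros)
  with convex_closure_interior[OF convex interior_nonempty] w show ?thesis by auto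
qed

lemma grad_eq_outward_normal: "p \<in> frontier K \<Longrightarrow> grad \<rho> p = norm (grad \<rho> p) *\<^sub>R outward_normal \<rho> p"
  using grad_nonzero by (simp add: outward_normal_def)

lemma norm_outward_normal: "p \<in> frontier K \<Longrightarrow> norm (outward_normal \<rho> p) = 1"
  using grad_nonzero by (simp add: outward_normal_def)

lemma outward_normal_supports:
  assumes p: "p \<in> frontier K" and w: "w \<in> closure K"
  shows "w \<bullet> outward_normal \<rho> p \<le> p \<bullet> outward_normal \<rho> p"
proof -
  have "norm (grad \<rho> p) * ((w - p) \<bullet> outward_normal \<rho> p) \<le> 0"
    using grad_inner_nonpos[OF p w] grad_eq_outward_normal[OF p] by (metis inner_scaleR_right)
  with grad_nonzero[OF p] have "(w - p) \<bullet> outward_normal \<rho> p \<le> 0"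
    by (simp add: mult_le_0_iff)
  then show ?thesis by (simp add: inner_diff_left)
qed

lemma inj_on_outward_normal: "inj_on (outward_normal \<rho>) (frontier K)"
proof (rule inj_onI)
  fix p q assume p: "p \<in> frontier K" and q: "q \<in> frontier K"
    and eq: "outward_normal \<rho> p = outward_normal \<rho> q"
  have "q \<bullet> outward_normal \<rho> p \<le> p \<bullet> outward_normal \<rho> p"
    and "p \<bullet> outward_normal \<rho> p \<le> q \<bullet> outward_normal \<rho> p"
    using outward_normal_supports[OF p, of q] outward_normal_supports[OF q, of p] p q eq
    by (auto simp: frontier_def)
  then have "(q - p) \<bullet> outward_normal \<rho> p = 0" by (simp add: inner_diff_left)
  then have "(q - p) \<bullet> grad \<rho> p = 0"
    by (subst grad_eq_outward_normal[OF p]) simp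
  with tangent_plane_touches_once[OF p q] show "p = q" by simp
qed

lemma maximizer_outward_normal:
  assumes n: "norm n = 1" and p: "p \<in> closure K"
    and max: "\<And>w. w \<in> closure K \<Longrightarrow> w \<bullet> n \<le> p \<bullet> n"
  shows "p \<in> frontier K" "outward_normal \<rho> p = n"
proof -
  have nn: "n \<bullet> n = 1" using n by (simp add: norm_eq_1)
  have not_interior: "p + t *\<^sub>R v \<notin> interior K" if "0 < t" "0 < v \<bullet> n" for t v
  proof
    assume "p + t *\<^sub>R v \<in> interior K"
    then have "(p + t *\<^sub>R v) \<bullet> n \<le> p \<bullet> n"
      using max interior_subset closure_subset by blast
    with that show False by (simp add: inner_add_left mult_le_0_iff)
  qed
  show pf: "p \<in> frontier K"
  proof (rule ccontr)
    assume "p \<notin> frontier K"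
    with p have "p \<in> interior K" by (auto simp: frontier_def)
    then obtain e where "0 < e" "ball p e \<subseteq> interior K"
      using open_contains_ball open_interior by blast
    moreover have "p + (e / 2) *\<^sub>R n \<in> ball p e" using \<open>0 < e\<close> n by (simp add: dist_norm)
    ultimately show False using not_interior[of "e / 2" n] nn by auto
  qed
  let ?\<nu> = "outward_normal \<rho> p"
  show "?\<nu> = n"
  proof (rule ccontr)
    assume "?\<nu> \<noteq> n"
    then have "0 < (n - ?\<nu>) \<bullet> (n - ?\<nu>)" by simp
    then have lt: "?\<nu> \<bullet> n < 1"
      using nn norm_outward_normal[OF pf]
      by (simp add: norm_eq_1 inner_diff_left inner_diff_right inner_commute)
    then have "grad \<rho> p \<bullet> (n - ?\<nu>) < 0"
      using grad_nonzero[OF pf] norm_outward_normal[OF pf]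
      by (subst grad_eq_outward_normal[OF pf])
         (simp add: norm_eq_1 inner_diff_right inner_commute mult_pos_neg)
    then obtain d where d: "0 < d" "\<And>t. 0 < t \<Longrightarrow> t < d \<Longrightarrow> p + t *\<^sub>R (n - ?\<nu>) \<in> interior K"
      using interior_along_descent_direction[OF pf] by blast
    then have "p + (d / 2) *\<^sub>R (n - ?\<nu>) \<in> interior K" by simp
    moreover have "0 < (n - ?\<nu>) \<bullet> n" using lt nn by (simp add: inner_diff_left inner_commute[of n ?\<nu>])
    ultimately show False using not_interior[of "d / 2" "n - ?\<nu>"] d(1) by simp
  qed
qed

lemma ex1_frontier_outward_normal:
  assumes "norm n = 1"
  shows "\<exists>!y. y \<in> frontier K \<and> outward_normal \<rho> y = n"
proof -
  have "closure K \<noteq> {}" using interior_nonempty interior_subset closure_subset by blast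
  moreover have "continuous_on (closure K) (\<lambda>w. w \<bullet> n)" by (intro continuous_intros)
  ultimately obtain p where "p \<in> closure K" "\<And>w. w \<in> closure K \<Longrightarrow> w \<bullet> n \<le> p \<bullet> n"
    using continuous_attains_sup[OF compact_closure_body] by blast
  with maximizer_outward_normal[OF assms] inj_on_outward_normal show ?thesis
    by (metis inj_on_eq_iff)
qed

text \<open>The normal is encoded by the closed condition that \<open>y\<close> maximizes \<open>\<cdot> n\<close> on the closure.
  The gap \<open>(y - w) \<cdot> n\<close> is then a continuous function on a compact set of triples
  \<open>(n, w, y)\<close> with \<open>|w - y| \<ge> \<epsilon>\<close>, and it is positive there by strict convexity.\<close>
lemma near_maximizer_uniformly_close:
  assumes "0 < \<epsilon>"
  obtains \<eta> where "0 < \<eta>"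
    "\<And>n y w. norm n = 1 \<Longrightarrow> y \<in> frontier K \<Longrightarrow> outward_normal \<rho> y = n \<Longrightarrow>
       w \<in> closure K \<Longrightarrow> (y - w) \<bullet> n < \<eta> \<Longrightarrow> norm (w - y) < \<epsilon>"
proof -
  define S where "S = closure K"
  define C :: "((real^'n) \<times> (real^'n) \<times> (real^'n)) set" where
    "C = (sphere 0 1 \<times> S \<times> S) \<inter> {(n, w, y). \<epsilon> \<le> norm (w - y)} \<inter>
         (\<Inter>z\<in>S. {(n, w, y). z \<bullet> n \<le> y \<bullet> n})"
  have "compact C"
    unfolding C_def case_prod_unfold
    by (intro compact_Int_closed closed_INT closed_Collect_le compact_Times compact_sphere
          continuous_intros ballI) (auto simp: S_def bounded)
  moreover have "continuous_on C (\<lambda>(n, w, y). (y - w) \<bullet> n)"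
    unfolding case_prod_unfold by (intro continuous_intros)
  moreover have "0 < (\<lambda>(n, w, y). (y - w) \<bullet> n) q" if "q \<in> C" for q
  proof (cases q, rule ccontr)
    fix n w y assume "q = (n, w, y)" "\<not> 0 < (\<lambda>(n, w, y). (y - w) \<bullet> n) q"
    with that have "norm n = 1" "w \<in> S" "y \<in> S" "\<epsilon> \<le> norm (w - y)"
      "\<And>z. z \<in> S \<Longrightarrow> z \<bullet> n \<le> y \<bullet> n" "\<And>z. z \<in> S \<Longrightarrow> z \<bullet> n \<le> w \<bullet> n"
      by (force simp: C_def inner_diff_left)+
    with maximizer_outward_normal inj_on_outward_normal \<open>0 < \<epsilon>\<close> show False
      unfolding S_def by (metis inj_on_eq_iff norm_zero order.strict_iff_not right_minus_eq)
  qed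
  ultimately have "\<exists>\<eta>>0. \<forall>q\<in>C. \<eta> \<le> (\<lambda>(n, w, y). (y - w) \<bullet> n) q"
    by (rule compact_continuous_pos_imp_uniformly_pos)
  then obtain \<eta> where "0 < \<eta>" and \<eta>: "\<forall>q\<in>C. \<eta> \<le> (\<lambda>(n, w, y). (y - w) \<bullet> n) q"
    by blast
  show ?thesis
  proof (rule that[OF \<open>0 < \<eta>\<close>], rule ccontr)
    fix n y w assume "norm n = 1" "y \<in> frontier K" "outward_normal \<rho> y = n" "w \<in> closure K"
      "(y - w) \<bullet> n < \<eta>" "\<not> norm (w - y) < \<epsilon>"
    moreover from this have "(n, w, y) \<in> C"
      using outward_normal_supports by (auto simp: C_def S_def frontier_def)
    ultimately show False using \<eta> by fastforce
  qed
qed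

lemma uniform_interior_ball_near_closure_point:
  assumes "0 < \<eta>"
  shows "\<exists>r>0. \<forall>y n. y \<in> closure K \<longrightarrow> norm n = 1 \<longrightarrow>
    (\<exists>b. ball b r \<subseteq> interior K \<and> (\<forall>w\<in>ball b r. y \<bullet> n - \<eta> < w \<bullet> n))"
proof -
  obtain M where "0 < M" and M: "\<And>w. w \<in> closure K \<Longrightarrow> norm w \<le> M"
    using bounded_pos bounded_closure[OF bounded] by metis
  obtain a r where "0 < r" and ball: "ball a r \<subseteq> interior K"
    using interior_nonempty open_contains_ball[of "interior K"] by blast
  then have "a \<in> closure K" using interior_subset closure_subset centre_in_ball by blast
  define s where "s = min 1 (\<eta> / (2 * M + r))"
  have "0 < 2 * M + r" using \<open>0 < M\<close> \<open>0 < r\<close> by simp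
  then have s: "0 < s" "s \<le> 1" using assms by (auto simp: s_def)
  have "s * (2 * M + r) \<le> \<eta> / (2 * M + r) * (2 * M + r)"
    using \<open>0 < 2 * M + r\<close> by (intro mult_right_mono) (auto simp: s_def)
  with \<open>0 < 2 * M + r\<close> have s_gap: "s * (2 * M + r) \<le> \<eta>" by simp
  have "ball (y - s *\<^sub>R (y - a)) (s * r) \<subseteq> interior K \<and>
      (\<forall>w\<in>ball (y - s *\<^sub>R (y - a)) (s * r). y \<bullet> n - \<eta> < w \<bullet> n)"
    if y: "y \<in> closure K" and n: "norm n = 1" for y n
  proof
    show "ball (y - s *\<^sub>R (y - a)) (s * r) \<subseteq> interior K"
      by (rule convex_homothetic_ball_subset_interior[OF convex ball y s])
    have "norm (y - a) \<le> 2 * M"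
      using norm_triangle_ineq4[of y a] M[OF y] M[OF \<open>a \<in> closure K\<close>] by simp
    then have "s * (norm (y - a) + r) \<le> \<eta>"
      using s(1) s_gap by (smt (verit) mult_left_mono)
    then show "\<forall>w\<in>ball (y - s *\<^sub>R (y - a)) (s * r). y \<bullet> n - \<eta> < w \<bullet> n"
      using inner_lower_bound_homothetic_ball[OF n _ less_imp_le[OF s(1)]] by fastforce
  qed
  then have "\<forall>y n. y \<in> closure K \<longrightarrow> norm n = 1 \<longrightarrow>
      (\<exists>b. ball b (s * r) \<subseteq> interior K \<and> (\<forall>w\<in>ball b (s * r). y \<bullet> n - \<eta> < w \<bullet> n))"
    by blast
  moreover have "0 < s * r" using s(1) \<open>0 < r\<close> by simp
  ultimately show ?thesis by blast
qed

end

section \<open>The Gaussian and the target measure\<close>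

lemma summable_exp_neg_square_times_power:
  "summable (\<lambda>k::nat. exp (- (real k)\<^sup>2 / 2) * (real k + 1) ^ N)"
proof (rule summable_comparison_test')
  show "summable (\<lambda>k::nat. exp (-1::real) ^ k)"
    by (intro summable_geometric) simp
  fix k :: nat assume k: "2 * N + 2 \<le> k"
  have "(real k + 1) ^ N \<le> exp (real k) ^ N"
    by (intro power_mono) (auto simp: add.commute exp_ge_add_one_self)
  then have "exp (- (real k)\<^sup>2 / 2) * (real k + 1) ^ N \<le> exp (- (real k)\<^sup>2 / 2) * exp (real N * real k)"
    by (simp add: exp_of_nat_mult)
  also have "\<dots> = exp (- (real k)\<^sup>2 / 2 + real N * real k)"
    by (rule exp_add[symmetric])
  also have "\<dots> \<le> exp (- real k)"
  proof -
    have "real k * (2 * real N + 2) \<le> real k * real k" using k by (intro mult_left_mono) auto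
    then show ?thesis by (simp add: power2_eq_square algebra_simps)
  qed
  also have "\<dots> = exp (-1) ^ k" by (simp add: exp_of_nat_mult[symmetric])
  finally show "norm (exp (- (real k)\<^sup>2 / 2) * (real k + 1) ^ N) \<le> exp (-1) ^ k" by simp
qed

lemma sets_gauss [simp, measurable_cong]: "sets gauss = sets borel"
  and space_gauss [simp]: "space gauss = UNIV"
  by (simp_all add: gauss_def)

lemma AE_gauss_iff: "(AE x in gauss. P x) \<longleftrightarrow> (AE x in lborel. P x)"
  unfolding gauss_def by (subst AE_density) auto

text \<open>The Gaussian density is dominated by \<open>\<Sum>k. exp (-k\<^sup>2/2) \<cdot> indicator (cball 0 (k + 1))\<close>,
  whose integral is a convergent series of ball volumes.\<close>
lemma emeasure_gauss_finite: "emeasure (gauss :: (real^'n) measure) UNIV < \<infinity>"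
proof -
  let ?N = "DIM(real^'n)" and ?V = "unit_ball_vol (real DIM(real^'n))"
  define a where "a k = exp (- (real k)\<^sup>2 / 2)" for k :: nat
  define B where "B k = cball (0::real^'n) (real k + 1)" for k :: nat
  have "emeasure (gauss :: (real^'n) measure) UNIV = (\<integral>\<^sup>+(x::real^'n). ennreal (exp (- (norm x)\<^sup>2 / 2)) \<partial>lborel)"
    unfolding gauss_def by (subst emeasure_density) auto
  also have "\<dots> \<le> (\<integral>\<^sup>+x. (\<Sum>k. ennreal (a k) * indicator (B k) x) \<partial>lborel)"
  proof (intro nn_integral_mono)
    fix x :: "real^'n"
    define k where "k = nat \<lfloor>norm x\<rfloor>"
    have "real k = of_int \<lfloor>norm x\<rfloor>" by (simp add: k_def)
    then have k: "real k \<le> norm x" "norm x \<le> real k + 1"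
      using of_int_floor_le[of "norm x"] real_of_int_floor_add_one_ge[of "norm x"] by linarith+
    then have "exp (- (norm x)\<^sup>2 / 2) \<le> a k"
      by (simp add: a_def power_mono)
    also have "ennreal (a k) = ennreal (a k) * indicator (B k) x"
      using k by (simp add: B_def)
    also have "\<dots> \<le> (\<Sum>k. ennreal (a k) * indicator (B k) x)"
      using sum_le_suminf[OF summableI, of "{k}" "\<lambda>k. ennreal (a k) * indicator (B k) x"]
      by (simp only: sum.insert_remove[OF finite.emptyI] empty_Diff sum.empty add_0_right) simp
    finally show "ennreal (exp (- (norm x)\<^sup>2 / 2)) \<le> (\<Sum>k. ennreal (a k) * indicator (B k) x)"
      by (simp add: ennreal_leI)
  qed
  also have "\<dots> = (\<Sum>k. \<integral>\<^sup>+x. ennreal (a k) * indicator (B k) x \<partial>lborel)"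
    by (intro nn_integral_suminf borel_measurable_times_ennreal borel_measurable_indicator)
       (auto simp: B_def)
  also have "\<dots> = (\<Sum>k. ennreal (a k * (?V * (real k + 1) ^ ?N)))"
    by (simp add: B_def nn_integral_cmult_indicator emeasure_cball)
       (simp add: ennreal_mult'' unit_ball_vol_nonneg a_def)
  also have "\<dots> = ennreal (\<Sum>k. a k * (?V * (real k + 1) ^ ?N))"
    using summable_mult[OF summable_exp_neg_square_times_power, of ?V ?N]
    by (intro suminf_ennreal2) (auto simp: a_def unit_ball_vol_nonneg mult_ac)
  also have "\<dots> < \<infinity>" by simp
  finally show ?thesis .
qed

lemma finite_measure_gauss: "finite_measure (gauss :: (real^'n) measure)"
  using emeasure_gauss_finite by (intro finite_measureI) (simp add: less_top)

lemma emeasure_density_ge: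
  fixes f :: "'a::euclidean_space \<Rightarrow> ennreal"
  assumes "f \<in> borel_measurable borel" "B \<in> sets borel" "\<And>x. x \<in> B \<Longrightarrow> m \<le> f x"
  shows "m * emeasure lborel B \<le> emeasure (density lborel f) B"
proof -
  have "m * emeasure lborel B = (\<integral>\<^sup>+x. m * indicator B x \<partial>lborel)"
    using assms(2) by (simp add: nn_integral_cmult_indicator)
  also have "\<dots> \<le> (\<integral>\<^sup>+x. f x * indicator B x \<partial>lborel)"
    using assms(3) by (intro nn_integral_mono) (auto simp: indicator_def)
  also have "\<dots> = emeasure (density lborel f) B"
    using assms by (subst emeasure_density) auto
  finally show ?thesis .
qed

lemma measure_gauss_pos: "0 < measure gauss (UNIV :: (real^'n) set)"
proof -
  let ?V = "unit_ball_vol (real DIM(real^'n))"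
  have "ennreal (exp (- 1 / 2)) * emeasure lborel (ball (0::real^'n) 1) \<le> emeasure gauss (ball (0::real^'n) 1)"
    unfolding gauss_def
  proof (rule emeasure_density_ge)
    fix x :: "real^'n" assume "x \<in> ball 0 1"
    then have "(norm x)\<^sup>2 \<le> 1" by (simp add: abs_square_le_1)
    then show "ennreal (exp (- 1 / 2)) \<le> ennreal (exp (- (norm x)\<^sup>2 / 2))" by (intro ennreal_leI) simp
  qed auto
  then have "ennreal (exp (- 1 / 2) * ?V) \<le> ennreal (measure gauss (ball (0::real^'n) 1))"
    by (simp add: emeasure_ball finite_measure.emeasure_eq_measure[OF finite_measure_gauss]
        ennreal_mult'')
  then have "exp (- 1 / 2) * ?V \<le> measure gauss (ball (0::real^'n) 1)"
    by (subst (asm) ennreal_le_iff) auto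
  also have "\<dots> \<le> measure gauss (UNIV :: (real^'n) set)"
    by (intro finite_measure.finite_measure_mono[OF finite_measure_gauss]) auto
  finally show ?thesis by (simp add: less_le_trans[rotated])
qed

lemma measure_gauss_tail_tendsto_0:
  "(\<lambda>k. measure gauss {z :: real^'n. real k \<le> norm z}) \<longlonglongrightarrow> 0"
proof -
  have "range (\<lambda>k. {z :: real^'n. real k \<le> norm z}) \<subseteq> sets gauss"
    by (auto intro!: borel_closed closed_Collect_le continuous_intros)
  moreover have "decseq (\<lambda>k. {z :: real^'n. real k \<le> norm z})"
    by (auto simp: decseq_def)
  ultimately have "(\<lambda>k. measure gauss {z :: real^'n. real k \<le> norm z})
      \<longlonglongrightarrow> measure gauss (\<Inter>k. {z :: real^'n. real k \<le> norm z})"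
    by (rule finite_measure.finite_Lim_measure_decseq[OF finite_measure_gauss])
  moreover have "z \<notin> (\<Inter>k. {z. real k \<le> norm z})" for z :: "real^'n"
    using reals_Archimedean2[of "norm z"] by (auto simp: not_le)
  then have "(\<Inter>k. {z :: real^'n. real k \<le> norm z}) = {}" by blast
  ultimately show ?thesis by simp
qed

lemma measure_gauss_mono_AE:
  assumes "AE z in lborel. z \<in> A \<longrightarrow> z \<in> B" "B \<in> sets borel"
  shows "measure gauss A \<le> measure (gauss :: (real^'n) measure) B"
proof -
  have "emeasure gauss A \<le> emeasure (gauss :: (real^'n) measure) B"
    using assms by (intro emeasure_mono_AE) (simp_all add: AE_gauss_iff)
  then show ?thesis
    by (simp add: finite_measure.emeasure_eq_measure[OF finite_measure_gauss])
qed

definition target_density :: "(real^'n \<Rightarrow> real) \<Rightarrow> (real^'n) set \<Rightarrow> real^'n \<Rightarrow> real" where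
  "target_density F K x = exp (- (norm x)\<^sup>2 / 2) * exp (- F x) * indicator (interior K) x"

text \<open>\<open>K\<close> need not be Borel, but a convex set differs from its interior only by a
  null set, so the target measure has a Borel density.\<close>
lemma target_eq_density_interior:
  fixes K :: "(real^'n) set"
  assumes convex: "convex K" and F: "F \<in> borel_measurable borel"
  shows "target F K = density lborel (\<lambda>x. ennreal (target_density F K x))"
proof -
  have "frontier K \<in> null_sets lborel"
    using negligible_convex_frontier[OF convex]
    by (auto simp: null_sets_completion_iff negligible_iff_null_sets)
  then have "AE x in gauss. x \<notin> frontier K"
    by (simp add: AE_gauss_iff AE_not_in)
  then have "AE x in gauss. indicator K x = (indicator (interior K) x :: real)"
    by eventually_elim (use interior_subset closure_subset in \<open>auto simp: frontier_def indicator_def\<close>)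
  then have "target F K = density gauss (\<lambda>x. ennreal (exp (- F x) * indicator (interior K) x))"
    unfolding target_def density_def
    by (intro arg_cong[where f="measure_of _ _"] ext nn_integral_cong_AE) (auto elim!: AE_mp)
  also have "\<dots> = density lborel (\<lambda>x. ennreal (exp (- (norm x)\<^sup>2 / 2)) * ennreal (exp (- F x) * indicator (interior K) x))"
    unfolding gauss_def using F by (intro density_density_eq) auto
  also have "\<dots> = density lborel (\<lambda>x. ennreal (target_density F K x))"
    by (intro arg_cong[where f="density lborel"] ext) (simp add: target_density_def ennreal_mult'' mult.assoc)
  finally show ?thesis .
qed

lemma sets_target [simp, measurable_cong]: "sets (target F K) = sets borel"
  and space_target [simp]: "space (target F K) = UNIV"
  by (simp_all add: target_def gauss_def)

context
  fixes K :: "(real^'n) set" and F :: "real^'n \<Rightarrow> real"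
  assumes F_continuous: "continuous_on UNIV F"
begin

lemma borel_measurable_target_density: "(\<lambda>x. ennreal (target_density F K x)) \<in> borel_measurable borel"
  unfolding target_density_def using F_continuous
  by (intro measurable_compose[OF _ measurable_ennreal] borel_measurable_times
      borel_measurable_indicator borel_measurable_continuous_onI) (auto intro!: continuous_intros)

lemma target_density_upper_bound:
  assumes "bounded K"
  shows "\<exists>M. \<forall>x. target_density F K x \<le> M"
proof -
  have cont: "continuous_on (closure K) (\<lambda>x. exp (- (norm x)\<^sup>2 / 2) * exp (- F x))"
    using F_continuous by (auto intro!: continuous_intros intro: continuous_on_subset)
  from assms have "compact (closure K)" by (simp add: compact_closure)
  from compact_continuous_image[OF cont this]
  obtain M where M: "\<forall>x\<in>closure K. exp (- (norm x)\<^sup>2 / 2) * exp (- F x) \<le> M"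
    by (auto dest!: compact_imp_bounded simp: bounded_iff)
  have "target_density F K x \<le> max M 0" for x
    using M interior_subset[of K] closure_subset[of K]
    by (force simp: target_density_def indicator_def)
  then show ?thesis by blast
qed

lemma target_density_lower_bound:
  assumes "bounded K"
  shows "\<exists>m>0. \<forall>x\<in>interior K. m \<le> target_density F K x"
proof -
  have cont: "continuous_on (closure K) (\<lambda>x. exp (- (norm x)\<^sup>2 / 2) * exp (- F x))"
    using F_continuous by (auto intro!: continuous_intros intro: continuous_on_subset)
  from assms have "compact (closure K)" by (simp add: compact_closure)
  from compact_continuous_pos_imp_uniformly_pos[OF this cont]
  obtain m where "0 < m" "\<forall>x\<in>closure K. m \<le> exp (- (norm x)\<^sup>2 / 2) * exp (- F x)"
    by auto
  with interior_subset[of K] closure_subset[of K] show ?thesis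
    by (auto simp: target_density_def)
qed

context
  assumes convex: "convex K"
begin

lemma emeasure_target:
  "A \<in> sets borel \<Longrightarrow> emeasure (target F K) A = (\<integral>\<^sup>+x\<in>A. ennreal (target_density F K x) \<partial>lborel)"
  using convex F_continuous borel_measurable_target_density
  by (simp add: target_eq_density_interior borel_measurable_continuous_onI emeasure_density)

lemma emeasure_target_outside_closure: "emeasure (target F K) (- closure K) = 0"
proof -
  have "(\<lambda>x. ennreal (target_density F K x) * indicator (- closure K) x) = (\<lambda>x. 0)"
  proof
    fix x show "ennreal (target_density F K x) * indicator (- closure K) x = 0"
    proof (cases "x \<in> closure K")
      case False
      then have "x \<notin> interior K" using interior_subset closure_subset by blast
      then show ?thesis by (simp add: target_density_def)
    qed simp
  qed
  then show ?thesis by (simp add: emeasure_target)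
qed

lemma emeasure_target_empty_interior: "interior K = {} \<Longrightarrow> emeasure (target F K) UNIV = 0"
  by (simp add: emeasure_target target_density_def)

lemma finite_measure_target:
  assumes "bounded K"
  shows "finite_measure (target F K)"
proof -
  obtain M where M: "\<And>x. target_density F K x \<le> M"
    using target_density_upper_bound[OF assms] by blast
  have bound: "ennreal (target_density F K x) \<le> ennreal M * indicator (closure K) x" for x
  proof (cases "x \<in> closure K")
    case False
    then have "x \<notin> interior K" using interior_subset closure_subset by blast
    then show ?thesis by (simp add: target_density_def)
  qed (simp add: M ennreal_leI)
  have "emeasure (target F K) UNIV = (\<integral>\<^sup>+x. ennreal (target_density F K x) \<partial>lborel)"
    by (simp add: emeasure_target)
  also have "\<dots> \<le> (\<integral>\<^sup>+x. ennreal M * indicator (closure K) x \<partial>lborel)"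
    by (rule nn_integral_mono) (rule bound)
  also have "\<dots> = ennreal M * emeasure lborel (closure K)"
    by (simp add: nn_integral_cmult_indicator)
  also have "\<dots> < \<infinity>"
    using emeasure_bounded_finite[OF bounded_closure[OF assms]]
    by (simp add: ennreal_mult_less_top)
  finally show ?thesis by (intro finite_measureI) (simp add: less_top)
qed

lemma measure_target_ball_ge:
  assumes "bounded K"
  obtains m where "0 < m"
    "\<And>c r. 0 < r \<Longrightarrow> ball c r \<subseteq> interior K \<Longrightarrow> m * r ^ DIM(real^'n) \<le> measure (target F K) (ball c r)"
proof -
  let ?V = "unit_ball_vol (real DIM(real^'n))"
  obtain m where "0 < m" and m: "\<And>x. x \<in> interior K \<Longrightarrow> m \<le> target_density F K x"
    using target_density_lower_bound[OF assms] by blast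
  have "m * ?V * r ^ DIM(real^'n) \<le> measure (target F K) (ball c r)"
    if "0 < r" "ball c r \<subseteq> interior K" for c :: "real^'n" and r
  proof -
    have "ennreal m * emeasure lborel (ball c r) = (\<integral>\<^sup>+x\<in>ball c r. ennreal m \<partial>lborel)"
      by (simp add: nn_integral_cmult_indicator)
    also have "\<dots> \<le> (\<integral>\<^sup>+x\<in>ball c r. ennreal (target_density F K x) \<partial>lborel)"
      using m that(2) by (intro nn_integral_mono) (auto simp: indicator_def intro!: ennreal_leI)
    also have "\<dots> = ennreal (measure (target F K) (ball c r))"
      by (simp add: emeasure_target[symmetric] finite_measure.emeasure_eq_measure[OF finite_measure_target[OF assms]])
    finally have "ennreal m * emeasure lborel (ball c r) \<le> ennreal (measure (target F K) (ball c r))" .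
    moreover have "ennreal m * emeasure lborel (ball c r) = ennreal (m * ?V * r ^ DIM(real^'n))"
      using \<open>0 < m\<close> that(1) by (simp add: emeasure_ball ennreal_mult'' mult.assoc)
    ultimately show ?thesis by simp
  qed
  with \<open>0 < m\<close> that[of "m * ?V"] show ?thesis by simp
qed

lemma measure_target_pos:
  assumes "bounded K" "interior K \<noteq> {}"
  shows "0 < measure (target F K) UNIV"
proof -
  obtain a r where "0 < r" "ball a r \<subseteq> interior K"
    using assms(2) open_contains_ball[of "interior K"] by blast
  moreover obtain m where "0 < m"
    "\<And>c r. 0 < r \<Longrightarrow> ball c r \<subseteq> interior K \<Longrightarrow> m * r ^ DIM(real^'n) \<le> measure (target F K) (ball c r)"
    using measure_target_ball_ge[OF assms(1)] by metis
  ultimately have "0 < measure (target F K) (ball a r)"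
    by (meson less_le_trans mult_pos_pos zero_less_power)
  also have "\<dots> \<le> measure (target F K) UNIV"
    by (rule finite_measure.finite_measure_mono[OF finite_measure_target[OF assms(1)]]) auto
  finally show ?thesis .
qed

end

end

section \<open>Transport by the gradient of a convex function\<close>

lemma AE_lborel_ex_in_ball:
  fixes c :: "'a::euclidean_space"
  assumes "AE x in lborel. P x" "0 < r"
  shows "\<exists>z\<in>ball c r. P z"
proof (rule ccontr)
  assume "\<not> (\<exists>z\<in>ball c r. P z)"
  with assms(1) have "AE x in lborel. x \<notin> ball c r"
    by (auto elim!: AE_mp)
  then have "ball c r \<in> null_sets lborel"
    by (subst AE_iff_null_sets) auto
  with content_ball_pos[OF assms(2), of c] show False by (simp add: null_setsD1 measure_def)
qed

text \<open>If \<open>a\<close> strictly separates \<open>g\<close> from \<open>C\<close>, then monotonicity of the gradient fails at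
  points \<open>z\<close> near \<open>x - a\<close> with \<open>\<nabla>\<phi>(z) \<in> C\<close>.\<close>
lemma gradient_mem_if_AE_gradient_mem:
  fixes \<phi> :: "'a::euclidean_space \<Rightarrow> real" and T :: "'a \<Rightarrow> 'a"
  assumes \<phi>: "convex_on UNIV \<phi>" and C: "closed C" "convex C" "bounded C"
    and AE: "AE z in lborel. T z \<in> C \<and> (\<phi> has_derivative (\<lambda>h. T z \<bullet> h)) (at z)"
    and g: "(\<phi> has_derivative (\<lambda>h. g \<bullet> h)) (at x)"
  shows "g \<in> C"
proof (rule ccontr)
  assume "g \<notin> C"
  then obtain a b where ab: "a \<bullet> g < b" "\<And>w. w \<in> C \<Longrightarrow> b < a \<bullet> w"
    using separating_hyperplane_closed_point[OF C(2,1)] by blast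
  obtain L where L: "0 < L" "\<And>w. w \<in> C \<Longrightarrow> norm (w - g) \<le> L"
    using bounded_pos[of "(\<lambda>w. w - g) ` C"] bounded_translation[OF C(3), of "- g"] by auto
  define \<gamma> where "\<gamma> = b - a \<bullet> g"
  have "0 < \<gamma>" using ab by (simp add: \<gamma>_def)
  then obtain z where z: "z \<in> ball (x - a) (\<gamma> / (2 * L))" "T z \<in> C"
      "(\<phi> has_derivative (\<lambda>h. T z \<bullet> h)) (at z)"
    using AE_lborel_ex_in_ball[OF AE, where c = "x - a" and r = "\<gamma> / (2 * L)"] L by auto
  define e where "e = z - (x - a)"
  have "(T z - g) \<bullet> e \<le> norm (T z - g) * norm e" by (rule norm_cauchy_schwarz)
  also have "\<dots> \<le> L * (\<gamma> / (2 * L))"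
    using z(1) L(1) L(2)[OF z(2)] by (intro mult_mono) (auto simp: e_def dist_norm norm_minus_commute)
  also have "\<dots> < \<gamma>" using L(1) \<open>0 < \<gamma>\<close> by simp
  also have "\<gamma> < a \<bullet> T z - a \<bullet> g" using ab(2)[OF z(2)] by (simp add: \<gamma>_def)
  finally have "(T z - g) \<bullet> (z - x) < 0"
    by (simp add: e_def algebra_simps inner_diff_left inner_diff_right inner_commute)
  with convex_on_gradient_monotone[OF \<phi> g z(3)] show False by simp
qed

lemma inner_ge_if_direction_close:
  fixes x n v :: "'a::real_inner"
  assumes "x \<noteq> 0" "norm (x /\<^sub>R norm x - n) \<le> \<delta>" "norm v \<le> D"
  shows "norm x * (v \<bullet> n - D * \<delta>) \<le> v \<bullet> x"
proof -
  have "v \<bullet> (n - x /\<^sub>R norm x) \<le> norm v * norm (x /\<^sub>R norm x - n)"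
    using norm_cauchy_schwarz[of v "n - x /\<^sub>R norm x"] by (simp add: norm_minus_commute)
  also have "\<dots> \<le> D * \<delta>"
    using assms(2,3) by (intro mult_mono) (auto intro: order_trans[OF norm_ge_zero])
  finally have "v \<bullet> n - D * \<delta> \<le> v \<bullet> (x /\<^sub>R norm x)"
    unfolding inner_diff_right by linarith
  then have "norm x * (v \<bullet> n - D * \<delta>) \<le> norm x * (v \<bullet> (x /\<^sub>R norm x))"
    by (rule mult_left_mono) simp
  also have "\<dots> = v \<bullet> x" using assms(1) by simp
  finally show ?thesis .
qed

locale gaussian_transport = smooth_strictly_convex_body K \<rho>
  for K :: "(real^'n) set" and \<rho> :: "real^'n \<Rightarrow> real" +
  fixes F \<phi> :: "real^'n \<Rightarrow> real" and T :: "real^'n \<Rightarrow> real^'n" and c :: real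
  assumes F_convex: "convex_on UNIV F"
    and phi_convex: "convex_on UNIV \<phi>"
    and T_measurable: "T \<in> borel_measurable borel"
    and T_gradient: "AE x in lborel. (\<phi> has_derivative (\<lambda>h. T x \<bullet> h)) (at x)"
    and c_pos: "0 < c"
    and pushforward: "\<And>E. E \<in> sets borel \<Longrightarrow> measure gauss (T -` E) = c * measure (target F K) E"
begin

lemma F_continuous: "continuous_on UNIV F"
  using convex_on_continuous[OF open_UNIV F_convex] .

lemma AE_T_in_closure: "AE z in lborel. T z \<in> closure K"
proof -
  have E: "- closure K \<in> sets borel" by auto
  have "measure (target F K) (- closure K) = 0"
    using emeasure_target_outside_closure[OF F_continuous convex] by (simp add: measure_def)
  then have "emeasure gauss (T -` (- closure K)) = 0"
    using pushforward[OF E] by (simp add: finite_measure.emeasure_eq_measure[OF finite_measure_gauss])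
  then have "T -` (- closure K) \<in> null_sets gauss"
    using measurable_sets[OF T_measurable E] by (intro null_setsI) auto
  then show ?thesis by (auto simp: AE_gauss_iff[symmetric] dest: AE_not_in)
qed

lemma gradient_in_closure:
  assumes "(\<phi> has_derivative (\<lambda>h. g \<bullet> h)) (at x)"
  shows "g \<in> closure K"
  using AE_T_in_closure T_gradient
  by (intro gradient_mem_if_AE_gradient_mem[OF phi_convex closed_closure convex_closure[OF convex]
        bounded_closure[OF bounded] _ assms]) (simp add: AE_conj_iff)

lemma measure_preimage_ball_ge:
  assumes "0 < r"
  shows "\<exists>m>0. \<forall>b. ball b r \<subseteq> interior K \<longrightarrow> m \<le> measure gauss (T -` ball b r)"
proof -
  obtain m where "0 < m"
    and m: "\<And>b. ball b r \<subseteq> interior K \<Longrightarrow> m * r ^ DIM(real^'n) \<le> measure (target F K) (ball b r)"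
    using measure_target_ball_ge[OF F_continuous convex bounded] assms by metis
  have "c * (m * r ^ DIM(real^'n)) \<le> measure gauss (T -` ball b r)" if "ball b r \<subseteq> interior K" for b
    using m[OF that] c_pos by (simp add: pushforward)
  with \<open>0 < m\<close> c_pos assms show ?thesis by (intro exI[of _ "c * (m * r ^ DIM(real^'n))"]) auto
qed

lemma AE_preimage_far_out:
  assumes "(\<phi> has_derivative (\<lambda>h. g \<bullet> h)) (at x)" "0 < D"
    and "\<And>w. w \<in> B \<Longrightarrow> norm (w - g) \<le> D \<and> a \<le> (w - g) \<bullet> x"
  shows "AE z in lborel. T z \<in> B \<longrightarrow> a / D \<le> norm z"
  using T_gradient
proof eventually_elim
  case (elim z)
  show ?case
  proof
    assume "T z \<in> B"
    with assms(3) have bound: "norm (T z - g) \<le> D" and "a \<le> (T z - g) \<bullet> x" by auto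
    then have "a \<le> (T z - g) \<bullet> z"
      using convex_on_gradient_monotone[OF phi_convex assms(1) elim] by (simp add: inner_diff_right)
    also have "\<dots> \<le> D * norm z"
      using norm_cauchy_schwarz[of "T z - g" z] mult_right_mono[OF bound norm_ge_zero[of z]] by linarith
    finally show "a / D \<le> norm z" using assms(2) by (simp add: divide_le_eq mult.commute)
  qed
qed

lemma gradient_nearly_maximizes_inner:
  assumes "0 < \<eta>"
  shows "\<exists>R>0. \<exists>\<delta>>0. \<forall>n y x g. norm n = 1 \<longrightarrow> y \<in> closure K \<longrightarrow> R < norm x \<longrightarrow>
    norm (x /\<^sub>R norm x - n) < \<delta> \<longrightarrow> (\<phi> has_derivative (\<lambda>h. g \<bullet> h)) (at x) \<longrightarrow>
    y \<bullet> n - \<eta> < g \<bullet> n"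
proof -
  obtain M where "0 < M" and M: "\<And>w. w \<in> closure K \<Longrightarrow> norm w \<le> M"
    using bounded_pos bounded_closure[OF bounded] by metis
  obtain r where "0 < r" and balls: "\<And>y n. y \<in> closure K \<Longrightarrow> norm n = 1 \<Longrightarrow>
      \<exists>b. ball b r \<subseteq> interior K \<and> (\<forall>w\<in>ball b r. y \<bullet> n - \<eta> / 4 < w \<bullet> n)"
    using uniform_interior_ball_near_closure_point[of "\<eta> / 4"] assms by auto
  obtain m where "0 < m" and m: "\<And>b. ball b r \<subseteq> interior K \<Longrightarrow> m \<le> measure gauss (T -` ball b r)"
    using measure_preimage_ball_ge[OF \<open>0 < r\<close>] by auto
  obtain k :: nat where k: "measure gauss {z :: real^'n. real k \<le> norm z} < m"
    using order_tendstoD(2)[OF measure_gauss_tail_tendsto_0 \<open>0 < m\<close>] by (auto simp: eventually_sequentially)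
  define \<delta> where "\<delta> = \<eta> / (8 * M)"
  define R where "R = 4 * M * real k / \<eta> + 1"
  have "0 < R" "0 < \<delta>"
    using assms \<open>0 < M\<close> by (auto simp: R_def \<delta>_def intro!: add_nonneg_pos)
  moreover have "y \<bullet> n - \<eta> < g \<bullet> n"
    if n: "norm n = 1" and y: "y \<in> closure K" and x: "R < norm x"
      and dir: "norm (x /\<^sub>R norm x - n) < \<delta>" and g: "(\<phi> has_derivative (\<lambda>h. g \<bullet> h)) (at x)"
    for n y x g
  proof (rule ccontr)
    assume gap: "\<not> y \<bullet> n - \<eta> < g \<bullet> n"
    obtain b where B: "ball b r \<subseteq> interior K" and above: "\<forall>w\<in>ball b r. y \<bullet> n - \<eta> / 4 < w \<bullet> n"
      using balls[OF y n] by blast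
    have "x \<noteq> 0" using x \<open>0 < R\<close> by auto
    have "norm (w - g) \<le> 2 * M \<and> norm x * (\<eta> / 2) \<le> (w - g) \<bullet> x" if "w \<in> ball b r" for w
    proof
      have "w \<in> closure K" using B that interior_subset closure_subset by blast
      then show norm_le: "norm (w - g) \<le> 2 * M"
        using norm_triangle_ineq4[of w g] M gradient_in_closure[OF g] by (smt (verit))
      have "y \<bullet> n - \<eta> / 4 < w \<bullet> n" using above that by blast
      with gap have "3 * \<eta> / 4 \<le> (w - g) \<bullet> n" by (simp add: inner_diff_left)
      moreover have "2 * M * \<delta> = \<eta> / 4" using \<open>0 < M\<close> by (simp add: \<delta>_def)
      ultimately have "norm x * (\<eta> / 2) \<le> norm x * ((w - g) \<bullet> n - 2 * M * \<delta>)"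
        by (intro mult_left_mono) auto
      also have "\<dots> \<le> (w - g) \<bullet> x"
        using inner_ge_if_direction_close[OF \<open>x \<noteq> 0\<close> less_imp_le[OF dir] norm_le] .
      finally show "norm x * (\<eta> / 2) \<le> (w - g) \<bullet> x" .
    qed
    then have "AE z in lborel. T z \<in> ball b r \<longrightarrow> norm x * (\<eta> / 2) / (2 * M) \<le> norm z"
      using \<open>0 < M\<close> by (intro AE_preimage_far_out[OF g]) auto
    moreover have "real k \<le> norm x * (\<eta> / 2) / (2 * M)"
      using x assms \<open>0 < M\<close> by (simp add: R_def field_simps)
    ultimately have "AE z in lborel. z \<in> T -` ball b r \<longrightarrow> z \<in> {z. real k \<le> norm z}"
      by (auto elim: AE_mp)
    then have "measure gauss (T -` ball b r) \<le> measure gauss {z :: real^'n. real k \<le> norm z}"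
      by (rule measure_gauss_mono_AE) auto
    with m[OF B] k show False by simp
  qed
  ultimately show ?thesis by blast
qed

lemma gradient_close_to_support_point:
  assumes "0 < \<epsilon>"
  shows "\<exists>R>0. \<exists>\<delta>>0. \<forall>n y x g. norm n = 1 \<longrightarrow> y \<in> frontier K \<longrightarrow> outward_normal \<rho> y = n \<longrightarrow>
    R < norm x \<longrightarrow> norm (x /\<^sub>R norm x - n) < \<delta> \<longrightarrow> (\<phi> has_derivative (\<lambda>h. g \<bullet> h)) (at x) \<longrightarrow>
    dist g y < \<epsilon>"
proof -
  obtain \<eta> where "0 < \<eta>" and close: "\<And>n y w. norm n = 1 \<Longrightarrow> y \<in> frontier K \<Longrightarrow>
      outward_normal \<rho> y = n \<Longrightarrow> w \<in> closure K \<Longrightarrow> (y - w) \<bullet> n < \<eta> \<Longrightarrow> norm (w - y) < \<epsilon>"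
    using near_maximizer_uniformly_close[OF assms] by blast
  then obtain R \<delta> where "0 < R" "0 < \<delta>" and above: "\<forall>n y x g. norm n = 1 \<longrightarrow> y \<in> closure K \<longrightarrow>
      R < norm x \<longrightarrow> norm (x /\<^sub>R norm x - n) < \<delta> \<longrightarrow> (\<phi> has_derivative (\<lambda>h. g \<bullet> h)) (at x) \<longrightarrow>
      y \<bullet> n - \<eta> < g \<bullet> n"
    using gradient_nearly_maximizes_inner by blast
  have "dist g y < \<epsilon>"
    if "norm n = 1" "y \<in> frontier K" "outward_normal \<rho> y = n" "R < norm x"
      "norm (x /\<^sub>R norm x - n) < \<delta>" "(\<phi> has_derivative (\<lambda>h. g \<bullet> h)) (at x)" for n y x g
  proof -
    have "y \<in> closure K" using that(2) by (simp add: frontier_def)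
    with above that have "y \<bullet> n - \<eta> < g \<bullet> n" by blast
    then have "(y - g) \<bullet> n < \<eta>" by (simp add: inner_diff_left)
    with close[OF that(1-3) gradient_in_closure[OF that(6)]] show ?thesis by (simp add: dist_norm)
  qed
  with \<open>0 < R\<close> \<open>0 < \<delta>\<close> show ?thesis by blast
qed

end

theorem lemma2p1:
  fixes K :: "(real^'n) set" and \<rho> F \<phi> :: "real^'n \<Rightarrow> real"
    and T :: "real^'n \<Rightarrow> real^'n"
  assumes bounded: "bounded K"
    and smooth: "smooth_defining_function \<rho> K"
    and strict: "strictly_convex_smooth \<rho> K"
    and F_convex: "convex_on UNIV F"
    and phi_convex: "convex_on UNIV \<phi>"
    and T_meas: "T \<in> borel_measurable borel"
    and T_grad: "AE x in lborel. (\<phi> has_derivative (\<lambda>h. T x \<bullet> h)) (at x)"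
    and push: "\<forall>E \<in> sets borel. measure gauss (T -` E) =
                 (measure gauss UNIV / measure (target F K) UNIV) * measure (target F K) E"
  shows "(\<forall>n::real^'n. norm n = 1 \<longrightarrow>
            (\<exists>!y. y \<in> frontier K \<and> outward_normal \<rho> y = n)) \<and>
         (\<forall>\<epsilon>>0. \<exists>R>0. \<exists>\<delta>>0. \<forall>n y x g. norm n = 1 \<longrightarrow> y \<in> frontier K \<longrightarrow>
            outward_normal \<rho> y = n \<longrightarrow> norm x > R \<longrightarrow> norm (x /\<^sub>R norm x - n) < \<delta> \<longrightarrow>
            (\<phi> has_derivative (\<lambda>h. g \<bullet> h)) (at x) \<longrightarrow> dist g y < \<epsilon>)"
proof -
  have convex: "convex K" using strict by (simp add: strictly_convex_smooth_def)
  have F_continuous: "continuous_on UNIV F" using convex_on_continuous[OF open_UNIV F_convex] .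
  have "interior K \<noteq> {}"
  proof
    assume "interior K = {}"
    then have "measure (target F K) UNIV = 0"
      using emeasure_target_empty_interior[OF F_continuous convex] by (simp add: measure_def)
    with push[rule_format, of UNIV] show False
      by (simp add: measure_gauss_pos[THEN less_imp_neq, symmetric])
  qed
  then interpret smooth_strictly_convex_body K \<rho>
    using bounded smooth strict by unfold_locales
  have "0 < measure (target F K) UNIV"
    using measure_target_pos[OF F_continuous convex bounded interior_nonempty] .
  with push obtain c where "0 < c" "\<forall>E \<in> sets borel. measure gauss (T -` E) = c * measure (target F K) E"
    by (metis divide_pos_pos measure_gauss_pos)
  then interpret gaussian_transport K \<rho> F \<phi> T c
    using F_convex phi_convex T_meas T_grad by unfold_locales auto
  show ?thesis
    using ex1_frontier_outward_normal gradient_close_to_support_point by blast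
qed

end
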